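(* Let $G^{Init}$ be a gene tree for a gene set $\Gamma$, let $\mathcal G=\{G_1,\dots,G_k\}$ be a set of separated subtrees of $G^{Init}$ with $\bigcup_i\mathcal L(G_i)=\Gamma$, and let $G^{TR}$ be a tree for $\Gamma$ that displays every $G_i$ and is triplet respecting. Then for every node $x$ of $G^{Init}$ with $|\mathcal G(x)|\ge 2$, there exists a node $y$ of $G^{TR}$ such that $\mathcal L(y)=\mathcal L(x)$.
   Context: All trees are rooted and binary; $\mathcal L(x)$ denotes the set of leaves below node $x$ and $T[x]$ the subtree rooted at $x$. For $L'\subseteq\mathcal L(T)$, $T|_{L'}$ is obtained from the subtree rooted at $lca_T(L')$ by removing leaves not in $L'$ and suppressing internal degree-2 nodes other than the root; $T$ displays $T'$ if $T|_{\mathcal L(T')}$ is isomorphic to $T'$ preserving leaf labels. $\mathcal G$ is a set of separated subtrees of $G^{Init}$ if $G_i=G^{Init}[v_i]$ for pairwise separated nodes $v_i$ (none an ancestor of another). For a node $x$ of $G^{Init}$, $\mathcal G(x)$ is the set of trees of $\mathcal G$ that are subtrees of $G^{Init}[x]$. A tree $G^{TR}$ for $\Gamma$ displaying every $G_i$ is triplet respecting if for any three distinct trees $G_{i_1},G_{i_2},G_{i_3}\in\mathcal G$ and genes $a\in\mathcal L(G_{i_1})$, $b\in\mathcal L(G_{i_2})$, $c\in\mathcal L(G_{i_3})$, $G^{Init}|_{\{a,b,c\}}=G^{TR}|_{\{a,b,c\}}$. *)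

theory Defs
  imports Main
begin

text \<open>Rooted binary trees with leaves labelled by genes. Nodes of a tree are identified
with the subtrees rooted at them (leaf labels are required to be distinct, so each
subtree occurs exactly once).\<close>

datatype 'a tree = Leaf 'a | Node "'a tree" "'a tree"

fun leaf_list :: "'a tree \<Rightarrow> 'a list" where
  "leaf_list (Leaf a) = [a]"
| "leaf_list (Node l r) = leaf_list l @ leaf_list r"

definition leaves :: "'a tree \<Rightarrow> 'a set" where
  "leaves T = set (leaf_list T)"

fun subtrees :: "'a tree \<Rightarrow> 'a tree set" where
  "subtrees (Leaf a) = {Leaf a}"
| "subtrees (Node l r) = insert (Node l r) (subtrees l \<union> subtrees r)"

definition tree_for :: "'a tree \<Rightarrow> 'a set \<Rightarrow> bool" where
  "tree_for T Gamma \<longleftrightarrow> distinct (leaf_list T) \<and> leaves T = Gamma"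

text \<open>Restriction T|_L: keep leaves in L, suppress degree-2 nodes, root at lca.
  None if no leaf of T is in L.\<close>
fun restrict :: "'a tree \<Rightarrow> 'a set \<Rightarrow> 'a tree option" where
  "restrict (Leaf a) L = (if a \<in> L then Some (Leaf a) else None)"
| "restrict (Node l r) L =
     (case (restrict l L, restrict r L) of
        (None, t) \<Rightarrow> t
      | (t, None) \<Rightarrow> t
      | (Some a, Some b) \<Rightarrow> Some (Node a b))"

fun tree_iso :: "'a tree \<Rightarrow> 'a tree \<Rightarrow> bool" where
  "tree_iso (Leaf a) (Leaf b) = (a = b)"
| "tree_iso (Node a b) (Node c d) =
     ((tree_iso a c \<and> tree_iso b d) \<or> (tree_iso a d \<and> tree_iso b c))"
| "tree_iso _ _ = False"

definition displays :: "'a tree \<Rightarrow> 'a tree \<Rightarrow> bool" where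
  "displays T T' \<longleftrightarrow> (\<exists>t. restrict T (leaves T') = Some t \<and> tree_iso t T')"

definition separated_subtrees :: "'a tree set \<Rightarrow> 'a tree \<Rightarrow> bool" where
  "separated_subtrees GS G \<longleftrightarrow> GS \<subseteq> subtrees G \<and>
     (\<forall>g1\<in>GS. \<forall>g2\<in>GS. g1 \<noteq> g2 \<longrightarrow> g2 \<notin> subtrees g1)"

definition GS_at :: "'a tree set \<Rightarrow> 'a tree \<Rightarrow> 'a tree set" where
  "GS_at GS x = {g \<in> GS. g \<in> subtrees x}"

definition triplet_respecting :: "'a tree \<Rightarrow> 'a tree set \<Rightarrow> 'a tree \<Rightarrow> bool" where
  "triplet_respecting GInit GS GTR \<longleftrightarrow>
     (\<forall>g1\<in>GS. \<forall>g2\<in>GS. \<forall>g3\<in>GS. g1 \<noteq> g2 \<and> g1 \<noteq> g3 \<and> g2 \<noteq> g3 \<longrightarrow>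
       (\<forall>a\<in>leaves g1. \<forall>b\<in>leaves g2. \<forall>c\<in>leaves g3.
          (\<exists>t1 t2. restrict GInit {a,b,c} = Some t1 \<and> restrict GTR {a,b,c} = Some t2
                  \<and> tree_iso t1 t2)))"

end

theory Submission
  imports Defs
begin

text \<open>The argument is about clusters, the leaf sets of subtrees. Restriction to a leaf set L maps the clusters
of a tree onto their nonempty traces on L, and isomorphic trees have the same clusters, so a
triplet that agrees in GInit and GTR is separated in the same way by the clusters of both.
Let A = L(x). Every leaf of A lies in some tree of \<G>(x), since a tree of \<G> above x would
swallow all of \<G>(x). If a cluster C of GTR met A, missed some of A and contained a leaf d
outside A, we could pick p \<in> A \<inter> C and q \<in> A - C from different trees of \<G>(x); the triplet
{p, q, d} then has cherry {p, q} in GInit but C separates {p, d} from q in GTR, contradicting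
laminarity. Hence no cluster of GTR crosses A, which forces A itself to be a cluster.\<close>

lemma leaves_simps [simp]:
  "leaves (Leaf a) = {a}" "leaves (Node l r) = leaves l \<union> leaves r"
  by (simp_all add: leaves_def)

lemma leaves_nonempty: "leaves t \<noteq> {}"
  by (induction t) auto

lemma subtrees_refl [simp]: "t \<in> subtrees t"
  by (cases t) auto

lemma subtrees_trans: "s \<in> subtrees t \<Longrightarrow> u \<in> subtrees s \<Longrightarrow> u \<in> subtrees t"
  by (induction t) auto

lemma leaves_subtree: "s \<in> subtrees t \<Longrightarrow> leaves s \<subseteq> leaves t"
  by (induction t) auto

lemma subtrees_nested_if_leaves_overlap:
  assumes "distinct (leaf_list t)" "s1 \<in> subtrees t" "s2 \<in> subtrees t"
    and "leaves s1 \<inter> leaves s2 \<noteq> {}"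
  shows "s1 \<in> subtrees s2 \<or> s2 \<in> subtrees s1"
  using assms
proof (induction t)
  case (Node l r)
  have "leaves l \<inter> leaves r = {}"
    using Node.prems(1) by (auto simp: leaves_def)
  show ?case
  proof (cases "s1 = Node l r \<or> s2 = Node l r")
    case True
    then show ?thesis using Node.prems(2,3) by auto
  next
    case False
    then have "s1 \<in> subtrees l \<union> subtrees r" "s2 \<in> subtrees l \<union> subtrees r"
      using Node.prems(2,3) by auto
    moreover have "distinct (leaf_list l)" "distinct (leaf_list r)"
      using Node.prems(1) by auto
    ultimately show ?thesis
      using Node.IH Node.prems(4) \<open>leaves l \<inter> leaves r = {}\<close> leaves_subtree by blast
  qed
qed auto

definition clusters :: "'a tree \<Rightarrow> 'a set set" where
  "clusters t = leaves ` subtrees t"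

lemma clusters_simps [simp]:
  "clusters (Leaf a) = {{a}}"
  "clusters (Node l r) = insert (leaves l \<union> leaves r) (clusters l \<union> clusters r)"
  by (auto simp: clusters_def)

lemma leaves_in_clusters: "leaves t \<in> clusters t"
  by (simp add: clusters_def)

lemma cluster_subset_leaves: "C \<in> clusters t \<Longrightarrow> C \<subseteq> leaves t"
  by (auto simp: clusters_def dest: leaves_subtree)

lemma clusters_laminar:
  assumes "distinct (leaf_list t)" "C \<in> clusters t" "D \<in> clusters t" "C \<inter> D \<noteq> {}"
  shows "C \<subseteq> D \<or> D \<subseteq> C"
  using assms subtrees_nested_if_leaves_overlap[OF assms(1)] leaves_subtree
  unfolding clusters_def by blast

lemma restrict_eq_None_iff: "restrict t L = None \<longleftrightarrow> leaves t \<inter> L = {}"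
  by (induction t) (auto split: option.splits)

lemma leaves_restrict: "restrict t L = Some s \<Longrightarrow> leaves s = leaves t \<inter> L"
  by (induction t arbitrary: s) (auto split: option.splits if_splits simp: restrict_eq_None_iff)

lemma clusters_restrict:
  "restrict t L = Some s \<Longrightarrow> clusters s = {C \<inter> L |C. C \<in> clusters t \<and> C \<inter> L \<noteq> {}}"
proof (induction t arbitrary: s)
  case (Leaf a)
  then show ?case by (auto split: if_splits)
next
  case (Node l r)
  define traces where "traces u = {C \<inter> L |C. C \<in> clusters u \<and> C \<inter> L \<noteq> {}}" for u
  have "leaves (Node l r) \<inter> L \<noteq> {}"
    by (metis Node.prems option.distinct(1) restrict_eq_None_iff)
  then have traces_Node: "traces (Node l r) = insert ((leaves l \<union> leaves r) \<inter> L) (traces l \<union> traces r)"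
    by (auto simp: traces_def)
  have traces_None: "traces u = {}" if "restrict u L = None" for u
    using that[unfolded restrict_eq_None_iff] cluster_subset_leaves unfolding traces_def by blast
  have root_trace: "leaves u \<inter> L \<in> traces u" if "restrict u L = Some su" for u su
    using leaves_restrict[OF that] leaves_nonempty[of su] leaves_in_clusters[of u]
    unfolding traces_def by blast
  have IH_l: "clusters sl = traces l" if "restrict l L = Some sl" for sl
    using Node.IH(1)[OF that] unfolding traces_def .
  have IH_r: "clusters sr = traces r" if "restrict r L = Some sr" for sr
    using Node.IH(2)[OF that] unfolding traces_def .
  show ?case
    unfolding traces_def[symmetric] traces_Node
  proof (cases "restrict l L"; cases "restrict r L")
    fix sl sr
    assume "restrict l L = Some sl" "restrict r L = Some sr"
    moreover from this have "s = Node sl sr"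
      using Node.prems by simp
    ultimately show "clusters s = insert ((leaves l \<union> leaves r) \<inter> L) (traces l \<union> traces r)"
      using IH_l IH_r by (simp add: leaves_restrict Int_Un_distrib2)
  next
    fix sr
    assume "restrict l L = None" "restrict r L = Some sr"
    moreover from this have "s = sr"
      using Node.prems by simp
    ultimately show "clusters s = insert ((leaves l \<union> leaves r) \<inter> L) (traces l \<union> traces r)"
      using IH_l IH_r root_trace traces_None by (simp add: restrict_eq_None_iff Int_Un_distrib2 insert_absorb)
  next
    fix sl
    assume "restrict l L = Some sl" "restrict r L = None"
    moreover from this have "s = sl"
      using Node.prems by simp
    ultimately show "clusters s = insert ((leaves l \<union> leaves r) \<inter> L) (traces l \<union> traces r)"
      using IH_l IH_r root_trace traces_None by (simp add: restrict_eq_None_iff Int_Un_distrib2 insert_absorb)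
  qed (use Node.prems in simp)
qed

lemma leaves_tree_iso: "tree_iso t u \<Longrightarrow> leaves t = leaves u"
  by (induction t u rule: tree_iso.induct) auto

lemma clusters_tree_iso: "tree_iso t u \<Longrightarrow> clusters t = clusters u"
proof (induction t u rule: tree_iso.induct)
  case (2 a b c d)
  then consider "tree_iso a c" "tree_iso b d" | "tree_iso a d" "tree_iso b c"
    by auto
  then show ?case
    using 2 by cases (auto simp: leaves_tree_iso)
qed auto

lemma cluster_transfer_along_triplet:
  assumes "restrict T {a, b, c} = Some t" "restrict T' {a, b, c} = Some t'" "tree_iso t t'"
    and "C \<in> clusters T" "a \<in> C" "b \<in> C" "c \<notin> C"
  shows "\<exists>D\<in>clusters T'. a \<in> D \<and> b \<in> D \<and> c \<notin> D"
proof -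
  have "C \<inter> {a, b, c} \<in> clusters t"
    using assms(4,5) clusters_restrict[OF assms(1)] by blast
  then have "C \<inter> {a, b, c} \<in> clusters t'"
    using clusters_tree_iso[OF assms(3)] by simp
  then obtain D where "D \<in> clusters T'" "C \<inter> {a, b, c} = D \<inter> {a, b, c}"
    using clusters_restrict[OF assms(2)] by blast
  then show ?thesis
    using assms(5-7) by blast
qed

lemma cluster_if_uncrossed:
  assumes "A \<subseteq> leaves t" "A \<noteq> {}"
    and "\<And>C. C \<in> clusters t \<Longrightarrow> C \<inter> A \<noteq> {} \<Longrightarrow> \<not> A \<subseteq> C \<Longrightarrow> C \<subseteq> A"
  shows "A \<in> clusters t"
  using assms
proof (induction t)
  case (Leaf a)
  then show ?case by auto
next
  case (Node l r)
  consider "A \<subseteq> leaves l" | "A \<subseteq> leaves r" | "\<not> A \<subseteq> leaves l" "\<not> A \<subseteq> leaves r"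
    by blast
  then show ?case
  proof cases
    case 1
    then have "A \<in> clusters l"
      using Node.prems(2,3) by (intro Node.IH(1)) auto
    then show ?thesis by simp
  next
    case 2
    then have "A \<in> clusters r"
      using Node.prems(2,3) by (intro Node.IH(2)) auto
    then show ?thesis by simp
  next
    case 3
    have "leaves l \<inter> A \<noteq> {}" "leaves r \<inter> A \<noteq> {}"
      using 3 Node.prems(1) by auto
    then have "leaves l \<subseteq> A" "leaves r \<subseteq> A"
      using 3 by (simp_all add: Node.prems(3) leaves_in_clusters)
    then show ?thesis
      using Node.prems(1) by auto
  qed
qed

lemma leaves_covered_by_GS_at:
  assumes "distinct (leaf_list G)" "separated_subtrees GS G" "leaves G \<subseteq> \<Union> (leaves ` GS)"
    and "x \<in> subtrees G" "card (GS_at GS x) \<ge> 2"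
  shows "leaves x \<subseteq> \<Union> (leaves ` GS_at GS x)"
proof
  fix a
  assume a: "a \<in> leaves x"
  then have "a \<in> \<Union> (leaves ` GS)"
    using assms(3) leaves_subtree[OF assms(4)] by blast
  then obtain g where g: "g \<in> GS" "a \<in> leaves g"
    by blast
  have "g \<in> subtrees x"
  proof (rule ccontr)
    assume "g \<notin> subtrees x"
    moreover have "g \<in> subtrees G"
      using g(1) assms(2) unfolding separated_subtrees_def by blast
    ultimately have "x \<in> subtrees g"
      using subtrees_nested_if_leaves_overlap[OF assms(1) _ assms(4)] a g(2) by blast
    have "h = g" if "h \<in> GS_at GS x" for h
    proof -
      have "h \<in> GS" "h \<in> subtrees g"
        using that subtrees_trans[OF \<open>x \<in> subtrees g\<close>] unfolding GS_at_def by auto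
      then show "h = g"
        using assms(2) g(1) unfolding separated_subtrees_def by metis
    qed
    then have "GS_at GS x \<subseteq> {g}"
      by blast
    then show False
      using card_mono[of "{g}" "GS_at GS x"] assms(5) by simp
  qed
  then show "a \<in> \<Union> (leaves ` GS_at GS x)"
    using g unfolding GS_at_def by blast
qed

lemma blocks_split_by:
  assumes "A \<subseteq> (\<Union>i\<in>I. f i)" "\<And>i. i \<in> I \<Longrightarrow> f i \<noteq> {}" "card I \<ge> 2"
    and "C \<inter> A \<noteq> {}" "\<not> A \<subseteq> C"
  obtains i j p q where "i \<in> I" "j \<in> I" "i \<noteq> j" "p \<in> f i" "q \<in> f j" "p \<in> C" "q \<notin> C"
proof -
  obtain a i where a: "i \<in> I" "a \<in> f i" "a \<in> C"
    using assms(1,4) by blast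
  obtain b j where b: "j \<in> I" "b \<in> f j" "b \<notin> C"
    using assms(1,5) by blast
  have "\<not> I \<subseteq> {i}"
    using assms(3) card_mono[of "{i}" I] by auto
  then obtain k where k: "k \<in> I" "k \<noteq> i"
    by blast
  obtain c where c: "c \<in> f k"
    using assms(2)[OF k(1)] by blast
  show thesis
  proof (cases "i = j")
    case False
    with a b show thesis by (intro that[of i j a b])
  next
    case True
    show thesis
    proof (cases "c \<in> C")
      case True
      with b k c \<open>i = j\<close> show thesis by (intro that[of k j c b]) auto
    next
      case False
      with a k c show thesis by (intro that[of i k a c]) auto
    qed
  qed
qed

lemma leaves_uncrossed_if_triplet_respecting:
  assumes "tree_for GInit Gamma" "separated_subtrees GS GInit" "\<Union> (leaves ` GS) = Gamma"
    and "tree_for GTR Gamma" "triplet_respecting GInit GS GTR"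
    and "x \<in> subtrees GInit" "card (GS_at GS x) \<ge> 2"
    and "C \<in> clusters GTR" "C \<inter> leaves x \<noteq> {}" "\<not> leaves x \<subseteq> C"
  shows "C \<subseteq> leaves x"
proof
  fix d
  assume "d \<in> C"
  show "d \<in> leaves x"
  proof (rule ccontr)
    assume d_outside: "d \<notin> leaves x"
    have GS_at_below: "g \<in> GS \<and> leaves g \<subseteq> leaves x" if "g \<in> GS_at GS x" for g
      using that leaves_subtree by (auto simp: GS_at_def)
    have cover: "leaves x \<subseteq> (\<Union>g\<in>GS_at GS x. leaves g)"
      using assms(1-3,6,7) by (intro leaves_covered_by_GS_at) (auto simp: tree_for_def)
    obtain gp gq p q where pq: "gp \<in> GS_at GS x" "gq \<in> GS_at GS x" "gp \<noteq> gq"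
      "p \<in> leaves gp" "q \<in> leaves gq" "p \<in> C" "q \<notin> C"
      using blocks_split_by[where f = leaves, OF cover leaves_nonempty assms(7,9,10)] by blast
    have "d \<in> Gamma"
      using \<open>d \<in> C\<close> assms(4,8) cluster_subset_leaves by (auto simp: tree_for_def)
    then obtain g3 where g3: "g3 \<in> GS" "d \<in> leaves g3"
      using assms(3) by blast
    have "gp \<noteq> g3" "gq \<noteq> g3"
      using pq(1,2) g3(2) d_outside GS_at_below by blast+
    moreover have "gp \<in> GS" "gq \<in> GS"
      using pq(1,2) GS_at_below by blast+
    ultimately obtain t t' where t: "restrict GInit {p, q, d} = Some t"
        "restrict GTR {p, q, d} = Some t'" "tree_iso t t'"
      using assms(5) g3 pq(3-5) unfolding triplet_respecting_def by blast
    have "leaves x \<in> clusters GInit"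
      using assms(6) by (simp add: clusters_def)
    then obtain D where D: "D \<in> clusters GTR" "p \<in> D" "q \<in> D" "d \<notin> D"
      using cluster_transfer_along_triplet[OF t] pq GS_at_below d_outside by blast
    have "C \<subseteq> D \<or> D \<subseteq> C"
      using clusters_laminar[OF _ assms(8) D(1)] assms(4) D(2) pq(6)
      by (auto simp: tree_for_def)
    then show False
      using D \<open>d \<in> C\<close> pq(7) by blast
  qed
qed

theorem lemma6:
  fixes GInit GTR :: "'a tree" and Gamma :: "'a set" and GS :: "'a tree set"
  assumes "tree_for GInit Gamma"
    and "separated_subtrees GS GInit"
    and "\<Union> (leaves ` GS) = Gamma"
    and "tree_for GTR Gamma"
    and "\<forall>g\<in>GS. displays GTR g"
    and "triplet_respecting GInit GS GTR"
    and "x \<in> subtrees GInit"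
    and "card (GS_at GS x) \<ge> 2"
  shows "\<exists>y\<in>subtrees GTR. leaves y = leaves x"
proof -
  have "leaves x \<subseteq> leaves GTR"
    using assms(1,4,7) leaves_subtree by (auto simp: tree_for_def)
  then have "leaves x \<in> clusters GTR"
    using leaves_uncrossed_if_triplet_respecting[OF assms(1-4,6-8)] leaves_nonempty
    by (intro cluster_if_uncrossed) auto
  then show ?thesis
    by (auto simp: clusters_def)
qed

end
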